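(* Let $m,n\geqslant1$, $N\geqslant1$ and $(\mu,\nu)\in\Lambda_{m,n}(N)$. For every tensor $T\in V^{m,n}$ lying in the $GL(N)$-isotypic component of type $U^{(\mu,\nu)}$, $$\mathscr{C}_{m,n}(T)=\big(c(\mu)+c(\nu)+N|\nu|\big)T.$$
   Context: $V$ is an $N$-dimensional complex vector space with basis $\{e_i\}$, dual basis $\{e^i\}$; $V^{m,n}=V^{\otimes m}\otimes V^{*\otimes n}$ with the diagonal $GL(N)$-action (contragredient on $V^*$). $\tau_{ab}$ ($1\leqslant a<b\leqslant m$) swaps the $a$-th and $b$-th $V$-factors, $\tau_{a'b'}$ swaps $V^*$-factors; $\mathscr{L}_m=\sum_{a<b}\tau_{ab}$ (zero if $m<2$), $\mathscr{R}_n=\sum_{a'<b'}\tau_{a'b'}$ (zero if $n<2$). $\tau_{ab'}$ contracts the $a$-th $V$-factor with the $b'$-th $V^*$-factor and inserts $\sum_ke_k\otimes e^k$ in these positions; $\mathscr{A}_{m,n}=\sum_{a,b'}\tau_{ab'}$ and $\mathscr{C}_{m,n}=\mathscr{L}_m+\mathscr{R}_n-\mathscr{A}_{m,n}+Nn$. For a partition $\alpha$, $|\alpha|$ is its size and its content is $c(\alpha)=\sum_{(i,j)\in\alpha}(j-i)$ over boxes (row $i$, column $j$) of its Young diagram. $\Lambda_{m,n}(N)=\bigcup_{r=0}^{\min(m,n)}\Lambda^{(r)}_{m,n}(N)$ where $\Lambda^{(r)}_{m,n}(N)$ is the set of pairs of partitions $(\mu,\nu)$ with $m-|\mu|=n-|\nu|=r$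 and $\ell(\mu)+\ell(\nu)\leqslant N$. $U^{(\mu,\nu)}$ is the irreducible rational representation of $GL(N)$ with highest weight $(\mu_1,\dots,\mu_{\ell(\mu)},0,\dots,0,-\nu_{\ell(\nu)},\dots,-\nu_1)$. The isotypic component of type $U^{(\mu,\nu)}$ is the sum of all $GL(N)$-subrepresentations of $V^{m,n}$ isomorphic to $U^{(\mu,\nu)}$. *)

theory Defs
  imports Complex_Main
begin

text \<open>V = C^N with basis e_0..e_(N-1). A tensor in V^{m,n} is represented by its
coefficient function T I J (coefficient of e_I (x) e^J), I, J index lists;
it vanishes off valid multi-indices.\<close>

definition idx :: "nat \<Rightarrow> nat \<Rightarrow> nat list set" where
  "idx N k = {I. length I = k \<and> set I \<subseteq> {..<N}}"

type_synonym tensor = "nat list \<Rightarrow> nat list \<Rightarrow> complex"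

definition tens :: "nat \<Rightarrow> nat \<Rightarrow> nat \<Rightarrow> tensor set" where
  "tens N m n = {T. \<forall>I J. \<not> (I \<in> idx N m \<and> J \<in> idx N n) \<longrightarrow> T I J = 0}"

definition GL :: "nat \<Rightarrow> ((nat \<Rightarrow> nat \<Rightarrow> complex) \<times> (nat \<Rightarrow> nat \<Rightarrow> complex)) set" where
  "GL N = {(g, h). (\<forall>i<N. \<forall>j<N. (\<Sum>k<N. g i k * h k j) = (if i = j then 1 else 0))
                 \<and> (\<forall>i<N. \<forall>j<N. (\<Sum>k<N. h i k * g k j) = (if i = j then 1 else 0))}"

text \<open>Diagonal action: g on V-factors, contragredient (via h = g^{-1}) on V*-factors.\<close>
definition act :: "nat \<Rightarrow> nat \<Rightarrow> nat \<Rightarrow> (nat \<Rightarrow> nat \<Rightarrow> complex) \<times> (nat \<Rightarrow> nat \<Rightarrow> complex)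
    \<Rightarrow> tensor \<Rightarrow> tensor" where
  "act N m n gh T = (\<lambda>I J. if I \<in> idx N m \<and> J \<in> idx N n then
      (\<Sum>I'\<in>idx N m. \<Sum>J'\<in>idx N n.
         (\<Prod>a<m. fst gh (I ! a) (I' ! a)) * T I' J' * (\<Prod>b<n. snd gh (J' ! b) (J ! b)))
    else 0)"

definition subspace_t :: "nat \<Rightarrow> nat \<Rightarrow> nat \<Rightarrow> tensor set \<Rightarrow> bool" where
  "subspace_t N m n W \<longleftrightarrow> W \<subseteq> tens N m n \<and> (\<lambda>I J. 0) \<in> W
     \<and> (\<forall>S\<in>W. \<forall>T\<in>W. (\<lambda>I J. S I J + T I J) \<in> W)
     \<and> (\<forall>c. \<forall>T\<in>W. (\<lambda>I J. c * T I J) \<in> W)"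

definition subrep :: "nat \<Rightarrow> nat \<Rightarrow> nat \<Rightarrow> tensor set \<Rightarrow> bool" where
  "subrep N m n W \<longleftrightarrow> subspace_t N m n W \<and> (\<forall>gh\<in>GL N. \<forall>T\<in>W. act N m n gh T \<in> W)"

definition irred_subrep :: "nat \<Rightarrow> nat \<Rightarrow> nat \<Rightarrow> tensor set \<Rightarrow> bool" where
  "irred_subrep N m n W \<longleftrightarrow> subrep N m n W \<and> W \<noteq> {\<lambda>I J. 0}
     \<and> (\<forall>W'. subrep N m n W' \<and> W' \<subseteq> W \<longrightarrow> W' = {\<lambda>I J. 0} \<or> W' = W)"

definition hw_vector :: "nat \<Rightarrow> nat \<Rightarrow> nat \<Rightarrow> (nat \<Rightarrow> int) \<Rightarrow> tensor \<Rightarrow> bool" where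
  "hw_vector N m n lam v \<longleftrightarrow> v \<noteq> (\<lambda>I J. 0)
     \<and> (\<forall>(g, h)\<in>GL N. (\<forall>i<N. \<forall>j<N. i \<noteq> j \<longrightarrow> g i j = 0) \<longrightarrow>
          act N m n (g, h) v = (\<lambda>I J. (\<Prod>i<N. g i i powi lam i) * v I J))
     \<and> (\<forall>(g, h)\<in>GL N. (\<forall>i<N. g i i = 1) \<and> (\<forall>i<N. \<forall>j<N. j < i \<longrightarrow> g i j = 0) \<longrightarrow>
          act N m n (g, h) v = v)"

definition is_partition :: "nat list \<Rightarrow> bool" where
  "is_partition \<mu> \<longleftrightarrow> (\<forall>x\<in>set \<mu>. 0 < x) \<and> sorted_wrt (\<ge>) \<mu>"

text \<open>Highest weight (mu_1,...,mu_l,0,...,0,-nu_l',...,-nu_1), 0-based positions.\<close>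
definition hw :: "nat \<Rightarrow> nat list \<Rightarrow> nat list \<Rightarrow> nat \<Rightarrow> int" where
  "hw N \<mu> \<nu> i = (if i < length \<mu> then int (\<mu> ! i)
                 else if N - 1 - i < length \<nu> then - int (\<nu> ! (N - 1 - i)) else 0)"

text \<open>W is a subrepresentation isomorphic to U^(mu,nu).\<close>
definition of_type :: "nat \<Rightarrow> nat \<Rightarrow> nat \<Rightarrow> nat list \<Rightarrow> nat list \<Rightarrow> tensor set \<Rightarrow> bool" where
  "of_type N m n \<mu> \<nu> W \<longleftrightarrow> irred_subrep N m n W \<and> (\<exists>v\<in>W. hw_vector N m n (hw N \<mu> \<nu>) v)"

definition isotypic :: "nat \<Rightarrow> nat \<Rightarrow> nat \<Rightarrow> nat list \<Rightarrow> nat list \<Rightarrow> tensor set" where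
  "isotypic N m n \<mu> \<nu> = {T. \<exists>(k::nat) (Ts::nat \<Rightarrow> tensor). (\<forall>i<k. \<exists>W. of_type N m n \<mu> \<nu> W \<and> Ts i \<in> W)
        \<and> T = (\<lambda>I J. \<Sum>i<k. Ts i I J)}"

definition Lambda :: "nat \<Rightarrow> nat \<Rightarrow> nat \<Rightarrow> (nat list \<times> nat list) set" where
  "Lambda m n N = {(\<mu>, \<nu>). is_partition \<mu> \<and> is_partition \<nu> \<and>
      (\<exists>r\<le>min m n. m = sum_list \<mu> + r \<and> n = sum_list \<nu> + r) \<and> length \<mu> + length \<nu> \<le> N}"

definition content :: "nat list \<Rightarrow> int" where
  "content \<mu> = (\<Sum>i<length \<mu>. \<Sum>j<\<mu> ! i. int j - int i)"

definition swap_at :: "nat list \<Rightarrow> nat \<Rightarrow> nat \<Rightarrow> nat list" where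
  "swap_at I a b = I[a := I ! b, b := I ! a]"

definition Lop :: "nat \<Rightarrow> tensor \<Rightarrow> tensor" where
  "Lop m T = (\<lambda>I J. \<Sum>b<m. \<Sum>a<b. T (swap_at I a b) J)"

definition Rop :: "nat \<Rightarrow> tensor \<Rightarrow> tensor" where
  "Rop n T = (\<lambda>I J. \<Sum>b<n. \<Sum>a<b. T I (swap_at J a b))"

text \<open>tau_{ab'}: contract a-th V with b'-th V*, insert sum_k e_k (x) e^k.\<close>
definition contr :: "nat \<Rightarrow> nat \<Rightarrow> nat \<Rightarrow> nat \<Rightarrow> nat \<Rightarrow> tensor \<Rightarrow> tensor" where
  "contr N m n a b T = (\<lambda>I J. if I \<in> idx N m \<and> J \<in> idx N n \<and> I ! a = J ! b
      then (\<Sum>l<N. T (I[a := l]) (J[b := l])) else 0)"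

definition Aop :: "nat \<Rightarrow> nat \<Rightarrow> nat \<Rightarrow> tensor \<Rightarrow> tensor" where
  "Aop N m n T = (\<lambda>I J. \<Sum>a<m. \<Sum>b<n. contr N m n a b T I J)"

definition Cop :: "nat \<Rightarrow> nat \<Rightarrow> nat \<Rightarrow> tensor \<Rightarrow> tensor" where
  "Cop N m n T = (\<lambda>I J. Lop m T I J + Rop n T I J - Aop N m n T I J + of_nat (N * n) * T I J)"

end

theory Submission
  imports Defs "HOL-Combinatorics.Transposition"
begin

text \<open>
  Let \<open>E_ij\<close> act on \<open>V^{m,n}\<close> as the derivative of the group action along the
  transvections \<open>1 + t E_ij\<close>. Expanding the Casimir element \<open>\<Omega> = \<Sum>_{i,j} E_ij E_ji\<close>
  gives \<open>\<Omega> = 2 (L + R - A) + (m + n) N\<close>, so \<open>C = (\<Omega> - (m + n) N) / 2 + N n\<close>.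
  Since \<open>C\<close> commutes with \<open>GL(N)\<close>, its eigenspaces inside an irreducible
  subrepresentation \<open>W\<close> are subrepresentations, so \<open>C\<close> acts on \<open>W\<close> by its eigenvalue
  on a highest weight vector \<open>v\<close> of weight \<open>\<lambda>\<close>. There \<open>E_ij v = 0\<close> for \<open>i < j\<close>
  and \<open>E_ii v = \<lambda>_i v\<close>, hence by \<open>[E_ij, E_ji] = E_ii - E_jj\<close> we get
  \<open>\<Omega> v = \<Sum>_i \<lambda>_i (\<lambda>_i + N - 1 - 2 i) v\<close>, and for the highest weight of
  \<open>U^{(\<mu>,\<nu>)}\<close> this sum is \<open>2 c(\<mu>) + 2 c(\<nu>) + N (|\<mu>| + |\<nu>|)\<close>.
\<close>

lemma sum_lessThan_if_less:
  fixes f :: "nat \<Rightarrow> 'a :: comm_monoid_add"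
  assumes "c \<le> N"
  shows "(\<Sum>i<N. if i < c then f i else 0) = (\<Sum>i<c. f i)"
proof -
  have "{i \<in> {..<N}. i < c} = {..<c}" using assms by auto
  then show ?thesis by (simp add: sum.inter_filter[symmetric])
qed

lemma sum_swap_outer_pairs:
  "(\<Sum>i\<in>A. \<Sum>j\<in>B. \<Sum>a\<in>C. \<Sum>c\<in>D. f i j a c) = (\<Sum>a\<in>C. \<Sum>c\<in>D. \<Sum>i\<in>A. \<Sum>j\<in>B. f i j a c)"
proof -
  have "(\<Sum>i\<in>A. \<Sum>j\<in>B. \<Sum>a\<in>C. \<Sum>c\<in>D. f i j a c) = (\<Sum>i\<in>A. \<Sum>a\<in>C. \<Sum>j\<in>B. \<Sum>c\<in>D. f i j a c)"
    by (rule sum.cong[OF refl], rule sum.swap)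
  also have "\<dots> = (\<Sum>a\<in>C. \<Sum>i\<in>A. \<Sum>c\<in>D. \<Sum>j\<in>B. f i j a c)"
    by (subst sum.swap) (rule sum.cong[OF refl], rule sum.cong[OF refl], rule sum.swap)
  also have "\<dots> = (\<Sum>a\<in>C. \<Sum>c\<in>D. \<Sum>i\<in>A. \<Sum>j\<in>B. f i j a c)"
    by (rule sum.cong[OF refl], rule sum.swap)
  finally show ?thesis .
qed

lemma sum_off_diagonal_symmetric:
  fixes S :: "nat \<Rightarrow> nat \<Rightarrow> 'a :: comm_semiring_1"
  assumes "\<And>a c. S a c = S c a"
  shows "(\<Sum>a<k. \<Sum>c<k. if c \<noteq> a then S a c else 0) = 2 * (\<Sum>b<k. \<Sum>a<b. S a b)"
proof -
  have "(\<Sum>a<k. \<Sum>c<k. if c \<noteq> a then S a c else 0)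
      = (\<Sum>a<k. \<Sum>c<k. if a < c then S a c else 0) + (\<Sum>a<k. \<Sum>c<k. if c < a then S a c else 0)"
    by (simp only: sum.distrib[symmetric]) (intro sum.cong refl, auto)
  also have "(\<Sum>a<k. \<Sum>c<k. if c < a then S a c else 0) = (\<Sum>a<k. \<Sum>c<k. if a < c then S a c else 0)"
    by (subst sum.swap) (intro sum.cong refl, simp add: assms)
  also have "(\<Sum>a<k. \<Sum>c<k. if a < c then S a c else 0) = (\<Sum>c<k. \<Sum>a<c. S a c)"
    by (subst sum.swap) (rule sum.cong[OF refl], simp add: sum_lessThan_if_less)
  finally show ?thesis by (simp add: mult_2)
qed

lemma sum_pair_delta:
  assumes "finite A" "finite B" "p \<in> A" "q \<in> B"
  shows "(\<Sum>i\<in>A. \<Sum>j\<in>B. if p = i \<and> q = j then f i j else 0) = (f p q :: 'a :: comm_monoid_add)"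
proof -
  have "(\<Sum>i\<in>A. \<Sum>j\<in>B. if p = i \<and> q = j then f i j else 0)
      = (\<Sum>i\<in>A. if p = i then \<Sum>j\<in>B. if q = j then f i j else 0 else 0)"
    by (intro sum.cong refl) auto
  then show ?thesis using assms by simp
qed

lemma double_sum_lessThan: "2 * (\<Sum>j<p. int j) = int p * (int p - 1)"
  by (induction p) (auto simp: algebra_simps)

lemma power_int_inject:
  fixes x :: "'a :: linordered_field"
  assumes "1 < x"
  shows "x powi a = x powi b \<longleftrightarrow> a = b"
  using power_int_strict_increasing[OF _ assms, of a b] power_int_strict_increasing[OF _ assms, of b a]
  by (cases a b rule: linorder_cases) auto

lemma sum_nth_eq_count_list:
  assumes "length I = k"
  shows "(\<Sum>a<k. if I ! a = i then s else 0) = of_nat (count_list I i) * s"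
proof -
  have "count_list I i = card {a. a < k \<and> I ! a = i}"
    using assms by (simp add: count_list_eq_length_filter length_filter_conv_card eq_commute)
  then show ?thesis
    by (simp add: sum.inter_filter[symmetric])
qed

lemma prod_nth_eq_count_list:
  assumes "length I = k"
  shows "(\<Prod>a<k. if I ! a = i then s else 1) = s ^ count_list I i"
proof -
  have "count_list I i = card {a. a < k \<and> I ! a = i}"
    using assms by (simp add: count_list_eq_length_filter length_filter_conv_card eq_commute)
  then show ?thesis
    by (simp add: prod.inter_filter[symmetric])
qed

lemma prod_update_nth:
  assumes "length K = k" "length K' = k" "a < k"
  shows "(\<Prod>c<k. f (K[a := x] ! c) (K'[a := y] ! c)) = f x y * (\<Prod>c\<in>{..<k} - {a}. f (K ! c) (K' ! c))"
proof -
  have "(\<Prod>c<k. f (K[a := x] ! c) (K'[a := y] ! c)) = f x y * (\<Prod>c\<in>{..<k} - {a}. f (K[a := x] ! c) (K'[a := y] ! c))"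
    using assms by (simp add: prod.remove)
  also have "(\<Prod>c\<in>{..<k} - {a}. f (K[a := x] ! c) (K'[a := y] ! c)) = (\<Prod>c\<in>{..<k} - {a}. f (K ! c) (K' ! c))"
    by (intro prod.cong) auto
  finally show ?thesis .
qed

definition delta :: "'a \<Rightarrow> 'a \<Rightarrow> complex" where
  "delta p q = (if p = q then 1 else 0)"

lemma delta_commute: "delta p q = delta q p"
  by (simp add: delta_def)

lemma sum_delta:
  assumes "finite A" "x \<in> A"
  shows "(\<Sum>y\<in>A. delta x y * F y) = F x"
  using assms by (simp add: delta_def if_distrib[of "\<lambda>z. z * _"] cong: if_cong)

lemma prod_delta_nth:
  assumes "length I = k" "length I' = k"
  shows "(\<Prod>c<k. delta (I ! c) (I' ! c)) = delta I I'"
proof (cases "\<forall>c<k. I ! c = I' ! c")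
  case True
  then show ?thesis using assms by (simp add: delta_def list_eq_iff_nth_eq)
next
  case False
  then show ?thesis using assms by (auto simp: delta_def list_eq_iff_nth_eq)
qed

lemma finite_idx [simp]: "finite (idx N k)"
  using finite_lists_length_eq[of "{..<N}" k] by (simp add: idx_def conj_commute)

lemma idx_length: "I \<in> idx N k \<Longrightarrow> length I = k"
  by (simp add: idx_def)

lemma idx_nth_less:
  assumes "I \<in> idx N k" "a < k"
  shows "I ! a < N"
proof -
  have "I ! a \<in> set I" "set I \<subseteq> {..<N}" using assms by (auto simp: idx_def)
  then show ?thesis by auto
qed

lemma idx_update: "I \<in> idx N k \<Longrightarrow> l < N \<Longrightarrow> I[a := l] \<in> idx N k"
  by (auto simp: idx_def dest: subsetD[OF set_update_subset_insert])

lemma length_swap_at [simp]: "length (swap_at K a b) = length K"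
  by (simp add: swap_at_def)

lemma nth_swap_at:
  "a < length K \<Longrightarrow> b < length K \<Longrightarrow> c < length K \<Longrightarrow>
    swap_at K a b ! c = K ! Transposition.transpose a b c"
  by (auto simp: swap_at_def Transposition.transpose_def nth_list_update)

lemma swap_at_commute: "swap_at K a b = swap_at K b a"
  by (cases "a = b") (auto simp: swap_at_def list_update_swap)

lemma swap_at_swap_at [simp]:
  "a < length K \<Longrightarrow> b < length K \<Longrightarrow> swap_at (swap_at K a b) a b = K"
  by (rule nth_equalityI) (auto simp: nth_swap_at Transposition.transpose_def)

lemma swap_at_in_idx:
  "I \<in> idx N k \<Longrightarrow> a < k \<Longrightarrow> b < k \<Longrightarrow> swap_at I a b \<in> idx N k"
  unfolding swap_at_def by (intro idx_update) (auto intro: idx_nth_less)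

lemma swap_at_in_idx_iff:
  assumes "a < k" "b < k"
  shows "swap_at K a b \<in> idx N k \<longleftrightarrow> K \<in> idx N k"
proof
  assume K: "swap_at K a b \<in> idx N k"
  then have "length K = k"
    using idx_length[OF K] by simp
  then have "swap_at (swap_at K a b) a b = K"
    using assms by simp
  then show "K \<in> idx N k"
    using swap_at_in_idx[OF K assms] by simp
qed (rule swap_at_in_idx[OF _ assms])

lemma sum_idx_swap_at:
  assumes "a < k" "b < k"
  shows "(\<Sum>I\<in>idx N k. F (swap_at I a b)) = (\<Sum>I\<in>idx N k. F I)"
  by (rule sum.reindex_bij_witness[where i="\<lambda>I. swap_at I a b" and j="\<lambda>I. swap_at I a b"])
    (use assms in \<open>auto simp: idx_length intro: swap_at_in_idx\<close>)

lemma prod_swap_at: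
  assumes "a < length K" "b < length K" "length K' = length K"
  shows "(\<Prod>c<length K. f (swap_at K a b ! c) (swap_at K' a b ! c)) = (\<Prod>c<length K. f (K ! c) (K' ! c))"
  by (rule prod.reindex_bij_witness[where i="Transposition.transpose a b" and j="Transposition.transpose a b"])
    (use assms in \<open>auto simp: nth_swap_at Transposition.transpose_def\<close>)

lemma sum_idx_split_at:
  assumes "a < k" "0 < N"
  shows "(\<Sum>I\<in>idx N k. F I) = (\<Sum>I\<in>{I\<in>idx N k. I ! a = 0}. \<Sum>l<N. F (I[a := l]))"
proof -
  have "bij_betw (\<lambda>(I, l). I[a := l]) ({I\<in>idx N k. I ! a = 0} \<times> {..<N}) (idx N k)"
    by (rule bij_betw_byWitness[where f' = "\<lambda>I. (I[a := 0], I ! a)"])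
      (use assms in \<open>auto simp: idx_length idx_update list_update_same_conv intro: idx_nth_less[OF _ assms(1)]\<close>)
  then have "(\<Sum>I\<in>idx N k. F I) = (\<Sum>(I, l)\<in>{I\<in>idx N k. I ! a = 0} \<times> {..<N}. F (I[a := l]))"
    by (simp add: sum.reindex_bij_betw[symmetric, where g = F] prod.case_distrib)
  then show ?thesis
    by (simp add: sum.cartesian_product)
qed

lemma sum_idx_prod_delta:
  assumes "I \<in> idx N k"
  shows "(\<Sum>I'\<in>idx N k. (\<Prod>c<k. delta (I ! c) (I' ! c)) * F I') = F I"
proof -
  have "(\<Sum>I'\<in>idx N k. (\<Prod>c<k. delta (I ! c) (I' ! c)) * F I') = (\<Sum>I'\<in>idx N k. delta I I' * F I')"
    using assms by (intro sum.cong refl) (simp add: prod_delta_nth idx_length)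
  then show ?thesis using assms by (simp add: sum_delta)
qed

lemma delta_update:
  assumes "length I = k" "length I' = k" "a < k"
  shows "delta (I' ! a) l * (\<Prod>c\<in>{..<k} - {a}. delta (I ! c) (I' ! c)) = delta (I[a := l]) I'"
proof -
  have "delta (I[a := l]) I' = (\<Prod>c<k. delta (I[a := l] ! c) (I' ! c))"
    using assms by (simp add: prod_delta_nth)
  also have "\<dots> = delta l (I' ! a) * (\<Prod>c\<in>{..<k} - {a}. delta (I[a := l] ! c) (I' ! c))"
    using assms by (simp add: prod.remove)
  also have "(\<Prod>c\<in>{..<k} - {a}. delta (I[a := l] ! c) (I' ! c)) = (\<Prod>c\<in>{..<k} - {a}. delta (I ! c) (I' ! c))"
    by (intro prod.cong) auto
  finally show ?thesis by (simp add: delta_commute)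
qed

lemma sum_idx_delta_update:
  assumes "I \<in> idx N k" "l < N"
  shows "(\<Sum>I'\<in>idx N k. (\<Sum>a<k. delta (I ! a, I' ! a) (i, l) * (\<Prod>c\<in>{..<k} - {a}. delta (I ! c) (I' ! c))) * F I')
    = (\<Sum>a<k. if I ! a = i then F (I[a := l]) else 0)"
proof -
  have "(\<Sum>I'\<in>idx N k. delta (I ! a, I' ! a) (i, l) * (\<Prod>c\<in>{..<k} - {a}. delta (I ! c) (I' ! c)) * F I')
      = (if I ! a = i then F (I[a := l]) else 0)" if "a < k" for a
  proof (cases "I ! a = i")
    case True
    have "(\<Sum>I'\<in>idx N k. delta (I ! a, I' ! a) (i, l) * (\<Prod>c\<in>{..<k} - {a}. delta (I ! c) (I' ! c)) * F I')
        = (\<Sum>I'\<in>idx N k. delta (I[a := l]) I' * F I')"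
    proof (rule sum.cong[OF refl])
      fix I' assume "I' \<in> idx N k"
      then have "delta (I' ! a) l * (\<Prod>c\<in>{..<k} - {a}. delta (I ! c) (I' ! c)) = delta (I[a := l]) I'"
        using assms that by (intro delta_update) (simp_all add: idx_length)
      moreover have "delta (I ! a, I' ! a) (i, l) = delta (I' ! a) l"
        using True by (simp add: delta_def)
      ultimately show "delta (I ! a, I' ! a) (i, l) * (\<Prod>c\<in>{..<k} - {a}. delta (I ! c) (I' ! c)) * F I'
          = delta (I[a := l]) I' * F I'"
        by simp
    qed
    then show ?thesis
      using True assms by (simp add: sum_delta idx_update)
  qed (simp add: delta_def)
  then show ?thesis
    by (simp add: sum_distrib_right sum.swap[where B = "{..<k}"])
qed

section \<open>Linearity and equivariance of the operators\<close>

definition linear_op :: "(tensor \<Rightarrow> tensor) \<Rightarrow> bool" where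
  "linear_op F \<longleftrightarrow> (\<forall>S T. F (\<lambda>I J. S I J + T I J) = (\<lambda>I J. F S I J + F T I J))
     \<and> (\<forall>c T. F (\<lambda>I J. c * T I J) = (\<lambda>I J. c * F T I J))"

lemma linear_opD:
  assumes "linear_op F"
  shows "F (\<lambda>I J. S I J + T I J) = (\<lambda>I J. F S I J + F T I J)"
    and "F (\<lambda>I J. c * T I J) = (\<lambda>I J. c * F T I J)"
  using assms by (auto simp: linear_op_def)

lemma linear_op_zero:
  assumes "linear_op F"
  shows "F (\<lambda>I J. 0) = (\<lambda>I J. 0)"
  using linear_opD(2)[OF assms, of 0] by simp

lemma linear_op_diff:
  assumes "linear_op F"
  shows "F (\<lambda>I J. S I J - T I J) = (\<lambda>I J. F S I J - F T I J)"
  using linear_opD(1)[OF assms, of S "\<lambda>I J. - 1 * T I J"] linear_opD(2)[OF assms, of "- 1" T] by simp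

lemma linear_op_sum:
  assumes "linear_op F"
  shows "F (\<lambda>I J. \<Sum>x\<in>X. T x I J) = (\<lambda>I J. \<Sum>x\<in>X. F (T x) I J)"
proof (induction X rule: infinite_finite_induct)
  case (infinite X)
  then show ?case using linear_op_zero[OF assms] by simp
next
  case empty
  then show ?case using linear_op_zero[OF assms] by simp
next
  case (insert x X)
  then show ?case using linear_opD(1)[OF assms, of "T x"] by simp
qed

lemma linear_op_act: "linear_op (act N m n gh)"
  by (simp add: linear_op_def act_def fun_eq_iff distrib_left distrib_right sum.distrib
      sum_distrib_left mult_ac)

lemma linear_op_Lop: "linear_op (Lop m)"
  by (simp add: linear_op_def Lop_def fun_eq_iff sum.distrib sum_distrib_left)

lemma linear_op_Rop: "linear_op (Rop n)"
  by (simp add: linear_op_def Rop_def fun_eq_iff sum.distrib sum_distrib_left)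

lemma linear_op_contr: "linear_op (contr N m n a b)"
  by (simp add: linear_op_def contr_def fun_eq_iff sum.distrib sum_distrib_left)

lemma linear_op_Aop: "linear_op (Aop N m n)"
  by (simp add: linear_op_def Aop_def linear_opD[OF linear_op_contr] fun_eq_iff sum.distrib
      sum_distrib_left)

lemma linear_op_Cop: "linear_op (Cop N m n)"
  unfolding linear_op_def Cop_def
  by (simp add: linear_opD[OF linear_op_Lop] linear_opD[OF linear_op_Rop] linear_opD[OF linear_op_Aop]
      algebra_simps)

lemma act_swap_at_left:
  assumes "a < m" "b < m"
  shows "act N m n gh T (swap_at I a b) J = act N m n gh (\<lambda>I' J'. T (swap_at I' a b) J') I J"
proof (cases "I \<in> idx N m \<and> J \<in> idx N n")
  case False
  then show ?thesis using assms by (auto simp: act_def swap_at_in_idx_iff)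
next
  case True
  then have I: "I \<in> idx N m" and J: "J \<in> idx N n" by auto
  obtain g h where gh: "gh = (g, h)" by (cases gh)
  have "act N m n gh T (swap_at I a b) J = (\<Sum>I'\<in>idx N m. \<Sum>J'\<in>idx N n.
      (\<Prod>c<m. g (swap_at I a b ! c) (swap_at I' a b ! c)) * T (swap_at I' a b) J' * (\<Prod>d<n. h (J' ! d) (J ! d)))"
    using I J assms sum_idx_swap_at[OF assms, where N = N and F = "\<lambda>I'. \<Sum>J'\<in>idx N n.
      (\<Prod>c<m. g (swap_at I a b ! c) (I' ! c)) * T I' J' * (\<Prod>d<n. h (J' ! d) (J ! d))"]
    by (simp add: act_def gh swap_at_in_idx)
  also have "\<dots> = act N m n gh (\<lambda>I' J'. T (swap_at I' a b) J') I J"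
    using I J assms prod_swap_at[of a I b _ g] by (simp add: act_def gh idx_length cong: sum.cong)
  finally show ?thesis .
qed

lemma act_swap_at_right:
  assumes "a < n" "b < n"
  shows "act N m n gh T I (swap_at J a b) = act N m n gh (\<lambda>I' J'. T I' (swap_at J' a b)) I J"
proof (cases "I \<in> idx N m \<and> J \<in> idx N n")
  case False
  then show ?thesis using assms by (auto simp: act_def swap_at_in_idx_iff)
next
  case True
  then have I: "I \<in> idx N m" and J: "J \<in> idx N n" by auto
  obtain g h where gh: "gh = (g, h)" by (cases gh)
  have "act N m n gh T I (swap_at J a b) = (\<Sum>I'\<in>idx N m. \<Sum>J'\<in>idx N n.
      (\<Prod>c<m. g (I ! c) (I' ! c)) * T I' (swap_at J' a b) * (\<Prod>d<n. h (swap_at J' a b ! d) (swap_at J a b ! d)))"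
    using I J assms sum_idx_swap_at[OF assms, where N = N and F = "\<lambda>J'.
      (\<Prod>c<m. g (I ! c) (I' ! c)) * T I' J' * (\<Prod>d<n. h (J' ! d) (swap_at J a b ! d))" for I']
    by (simp add: act_def gh swap_at_in_idx)
  also have "\<dots> = act N m n gh (\<lambda>I' J'. T I' (swap_at J' a b)) I J"
    using I J assms prod_swap_at[of a J b _ "\<lambda>x y. h y x"] by (simp add: act_def gh idx_length cong: sum.cong)
  finally show ?thesis .
qed

lemma Lop_act: "Lop m (act N m n gh T) = act N m n gh (Lop m T)"
  by (simp add: Lop_def act_swap_at_left linear_op_sum[OF linear_op_act] fun_eq_iff)

lemma Rop_act: "Rop n (act N m n gh T) = act N m n gh (Rop n T)"
  by (simp add: Rop_def act_swap_at_right linear_op_sum[OF linear_op_act] fun_eq_iff)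

lemma GL_right_inverse: "(g, h) \<in> GL N \<Longrightarrow> p < N \<Longrightarrow> q < N \<Longrightarrow> (\<Sum>k<N. g p k * h k q) = delta p q"
  by (simp add: GL_def delta_def)

lemma GL_left_inverse: "(g, h) \<in> GL N \<Longrightarrow> p < N \<Longrightarrow> q < N \<Longrightarrow> (\<Sum>k<N. h p k * g k q) = delta p q"
  by (simp add: GL_def delta_def)

lemma GL_trace_conj:
  assumes "(g, h) \<in> GL N"
  shows "(\<Sum>l<N. \<Sum>k<N. \<Sum>k'<N. g l k * X k k' * h k' l) = (\<Sum>k<N. X k k)"
proof -
  have "(\<Sum>l<N. \<Sum>k<N. \<Sum>k'<N. g l k * X k k' * h k' l) = (\<Sum>k<N. \<Sum>l<N. \<Sum>k'<N. g l k * X k k' * h k' l)"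
    by (rule sum.swap)
  also have "\<dots> = (\<Sum>k<N. \<Sum>k'<N. \<Sum>l<N. g l k * X k k' * h k' l)"
    by (rule sum.cong[OF refl], rule sum.swap)
  also have "\<dots> = (\<Sum>k<N. \<Sum>k'<N. X k k' * (\<Sum>l<N. h k' l * g l k))"
    by (simp add: sum_distrib_left mult_ac)
  also have "\<dots> = (\<Sum>k<N. \<Sum>k'<N. delta k k' * X k k')"
  proof (intro sum.cong refl)
    fix k k' assume "k \<in> {..<N}" "k' \<in> {..<N}"
    then have "(\<Sum>l<N. h k' l * g l k) = delta k k'"
      using GL_left_inverse[OF assms] by (simp add: delta_commute)
    then show "X k k' * (\<Sum>l<N. h k' l * g l k) = delta k k' * X k k'" by simp
  qed
  also have "\<dots> = (\<Sum>k<N. X k k)"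
    by (simp add: sum_delta)
  finally show ?thesis .
qed

text \<open>The action of \<open>(g, h)\<close> on all factors except the \<open>a\<close>-th factor \<open>V\<close> and the
  \<open>b\<close>-th factor \<open>V*\<close>; the multi-indices \<open>I0\<close>, \<open>J0\<close> carry a dummy entry \<open>0\<close> there.\<close>

definition act_except_at ::
    "nat \<Rightarrow> nat \<Rightarrow> nat \<Rightarrow> (nat \<Rightarrow> nat \<Rightarrow> complex) \<Rightarrow> (nat \<Rightarrow> nat \<Rightarrow> complex) \<Rightarrow> nat \<Rightarrow> nat
      \<Rightarrow> nat list \<Rightarrow> nat list \<Rightarrow> (nat list \<Rightarrow> nat list \<Rightarrow> complex) \<Rightarrow> complex" where
  "act_except_at N m n g h a b I J F =
     (\<Sum>I0\<in>{I\<in>idx N m. I ! a = 0}. \<Sum>J0\<in>{J\<in>idx N n. J ! b = 0}.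
        (\<Prod>c\<in>{..<m} - {a}. g (I ! c) (I0 ! c)) * (\<Prod>d\<in>{..<n} - {b}. h (J0 ! d) (J ! d)) * F I0 J0)"

lemma act_except_at_cong:
  assumes "\<And>I0 J0. I0 \<in> idx N m \<Longrightarrow> I0 ! a = 0 \<Longrightarrow> J0 \<in> idx N n \<Longrightarrow> J0 ! b = 0 \<Longrightarrow> F I0 J0 = G I0 J0"
  shows "act_except_at N m n g h a b I J F = act_except_at N m n g h a b I J G"
  unfolding act_except_at_def using assms by (intro sum.cong refl) auto

lemma act_except_at_scale:
  "act_except_at N m n g h a b I J (\<lambda>I0 J0. c * F I0 J0) = c * act_except_at N m n g h a b I J F"
  by (simp add: act_except_at_def sum_distrib_left mult_ac)

lemma sum_act_except_at:
  "(\<Sum>l\<in>L. act_except_at N m n g h a b I J (F l)) = act_except_at N m n g h a b I J (\<lambda>I0 J0. \<Sum>l\<in>L. F l I0 J0)"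
  unfolding act_except_at_def
  by (subst sum.swap, rule sum.cong[OF refl], subst sum.swap) (simp add: sum_distrib_left)

lemma act_split_at:
  assumes I: "I \<in> idx N m" and J: "J \<in> idx N n" and ab: "a < m" "b < n" and pq: "p < N" "q < N"
  shows "act N m n (g, h) T (I[a := p]) (J[b := q]) = act_except_at N m n g h a b I J
    (\<lambda>I0 J0. \<Sum>k<N. \<Sum>k'<N. g p k * T (I0[a := k]) (J0[b := k']) * h k' q)"
proof -
  have N: "0 < N" using pq by simp
  have "act N m n (g, h) T (I[a := p]) (J[b := q]) = (\<Sum>I'\<in>idx N m. \<Sum>J'\<in>idx N n.
      (\<Prod>c<m. g (I[a := p] ! c) (I' ! c)) * T I' J' * (\<Prod>d<n. h (J' ! d) (J[b := q] ! d)))"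
    using I J pq by (simp add: act_def idx_update)
  also have "\<dots> = (\<Sum>I0\<in>{I\<in>idx N m. I ! a = 0}. \<Sum>k<N. \<Sum>J0\<in>{J\<in>idx N n. J ! b = 0}. \<Sum>k'<N.
      (\<Prod>c<m. g (I[a := p] ! c) (I0[a := k] ! c)) * T (I0[a := k]) (J0[b := k'])
      * (\<Prod>d<n. h (J0[b := k'] ! d) (J[b := q] ! d)))"
    by (simp only: sum_idx_split_at[OF ab(1) N] sum_idx_split_at[OF ab(2) N])
  also have "\<dots> = (\<Sum>I0\<in>{I\<in>idx N m. I ! a = 0}. \<Sum>J0\<in>{J\<in>idx N n. J ! b = 0}. \<Sum>k<N. \<Sum>k'<N.
      (\<Prod>c<m. g (I[a := p] ! c) (I0[a := k] ! c)) * T (I0[a := k]) (J0[b := k'])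
      * (\<Prod>d<n. h (J0[b := k'] ! d) (J[b := q] ! d)))"
    by (rule sum.cong[OF refl], rule sum.swap)
  also have "\<dots> = act_except_at N m n g h a b I J
      (\<lambda>I0 J0. \<Sum>k<N. \<Sum>k'<N. g p k * T (I0[a := k]) (J0[b := k']) * h k' q)"
    unfolding act_except_at_def
  proof (intro sum.cong refl)
    fix I0 J0 assume "I0 \<in> {I\<in>idx N m. I ! a = 0}" "J0 \<in> {J\<in>idx N n. J ! b = 0}"
    then have "length I0 = m" "length J0 = n" by (auto simp: idx_def)
    then show "(\<Sum>k<N. \<Sum>k'<N. (\<Prod>c<m. g (I[a := p] ! c) (I0[a := k] ! c)) * T (I0[a := k]) (J0[b := k'])
        * (\<Prod>d<n. h (J0[b := k'] ! d) (J[b := q] ! d)))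
      = (\<Prod>c\<in>{..<m} - {a}. g (I ! c) (I0 ! c)) * (\<Prod>d\<in>{..<n} - {b}. h (J0 ! d) (J ! d))
        * (\<Sum>k<N. \<Sum>k'<N. g p k * T (I0[a := k]) (J0[b := k']) * h k' q)"
      using idx_length[OF I] idx_length[OF J] ab by (simp add: prod_update_nth sum_distrib_left mult_ac)
  qed
  finally show ?thesis .
qed

lemma sum_act_update_diag:
  assumes gh: "(g, h) \<in> GL N" and I: "I \<in> idx N m" and J: "J \<in> idx N n" and ab: "a < m" "b < n"
  shows "(\<Sum>l<N. act N m n (g, h) T (I[a := l]) (J[b := l]))
    = act_except_at N m n g h a b I J (\<lambda>I0 J0. \<Sum>l<N. T (I0[a := l]) (J0[b := l]))"
proof -
  have "(\<Sum>l<N. act N m n (g, h) T (I[a := l]) (J[b := l])) = (\<Sum>l<N. act_except_at N m n g h a b I J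
      (\<lambda>I0 J0. \<Sum>k<N. \<Sum>k'<N. g l k * T (I0[a := k]) (J0[b := k']) * h k' l))"
    by (intro sum.cong refl) (simp add: act_split_at[OF I J ab])
  also have "\<dots> = act_except_at N m n g h a b I J
      (\<lambda>I0 J0. \<Sum>l<N. \<Sum>k<N. \<Sum>k'<N. g l k * T (I0[a := k]) (J0[b := k']) * h k' l)"
    by (rule sum_act_except_at)
  also have "\<dots> = act_except_at N m n g h a b I J (\<lambda>I0 J0. \<Sum>l<N. T (I0[a := l]) (J0[b := l]))"
    by (simp add: GL_trace_conj[OF gh])
  finally show ?thesis .
qed

lemma act_contr:
  assumes gh: "(g, h) \<in> GL N" and I: "I \<in> idx N m" and J: "J \<in> idx N n" and ab: "a < m" "b < n"
  shows "act N m n (g, h) (contr N m n a b T) I J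
    = delta (I ! a) (J ! b) * act_except_at N m n g h a b I J (\<lambda>I0 J0. \<Sum>l<N. T (I0[a := l]) (J0[b := l]))"
proof -
  have Ia: "I ! a < N" and Jb: "J ! b < N"
    using idx_nth_less[OF I ab(1)] idx_nth_less[OF J ab(2)] .
  have "act N m n (g, h) (contr N m n a b T) I J
      = act N m n (g, h) (contr N m n a b T) (I[a := I ! a]) (J[b := J ! b])"
    by simp
  also have "\<dots> = act_except_at N m n g h a b I J (\<lambda>I0 J0.
      \<Sum>k<N. \<Sum>k'<N. g (I ! a) k * contr N m n a b T (I0[a := k]) (J0[b := k']) * h k' (J ! b))"
    by (rule act_split_at[OF I J ab Ia Jb])
  also have "\<dots> = act_except_at N m n g h a b I J
      (\<lambda>I0 J0. delta (I ! a) (J ! b) * (\<Sum>l<N. T (I0[a := l]) (J0[b := l])))"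
  proof (rule act_except_at_cong)
    fix I0 J0 assume I0: "I0 \<in> idx N m" "I0 ! a = 0" and J0: "J0 \<in> idx N n" "J0 ! b = 0"
    define S where "S = (\<Sum>l<N. T (I0[a := l]) (J0[b := l]))"
    have "contr N m n a b T (I0[a := k]) (J0[b := k']) = delta k k' * S" if "k < N" "k' < N" for k k'
      using I0 J0 that ab idx_length[OF I0(1)] idx_length[OF J0(1)]
      by (simp add: contr_def S_def idx_update delta_def)
    then have "(\<Sum>k<N. \<Sum>k'<N. g (I ! a) k * contr N m n a b T (I0[a := k]) (J0[b := k']) * h k' (J ! b))
        = (\<Sum>k<N. \<Sum>k'<N. delta k k' * (g (I ! a) k * S * h k' (J ! b)))"
      by (intro sum.cong refl) (simp add: mult_ac)
    also have "\<dots> = (\<Sum>k<N. g (I ! a) k * S * h k (J ! b))"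
      by (rule sum.cong[OF refl]) (simp add: sum_delta)
    also have "\<dots> = S * (\<Sum>k<N. g (I ! a) k * h k (J ! b))"
      by (simp add: sum_distrib_left mult_ac)
    finally show "(\<Sum>k<N. \<Sum>k'<N. g (I ! a) k * contr N m n a b T (I0[a := k]) (J0[b := k']) * h k' (J ! b))
        = delta (I ! a) (J ! b) * S"
      using GL_right_inverse[OF gh Ia Jb] by simp
  qed
  also have "\<dots> = delta (I ! a) (J ! b) * act_except_at N m n g h a b I J (\<lambda>I0 J0. \<Sum>l<N. T (I0[a := l]) (J0[b := l]))"
    by (rule act_except_at_scale)
  finally show ?thesis .
qed

lemma contr_act:
  assumes gh: "(g, h) \<in> GL N" and ab: "a < m" "b < n"
  shows "contr N m n a b (act N m n (g, h) T) = act N m n (g, h) (contr N m n a b T)"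
proof (intro ext)
  fix I J
  show "contr N m n a b (act N m n (g, h) T) I J = act N m n (g, h) (contr N m n a b T) I J"
  proof (cases "I \<in> idx N m \<and> J \<in> idx N n")
    case False
    then show ?thesis by (auto simp: contr_def act_def)
  next
    case True
    then have I: "I \<in> idx N m" and J: "J \<in> idx N n" by auto
    then have "contr N m n a b (act N m n (g, h) T) I J
        = delta (I ! a) (J ! b) * (\<Sum>l<N. act N m n (g, h) T (I[a := l]) (J[b := l]))"
      by (simp add: contr_def delta_def)
    then show ?thesis
      by (simp add: sum_act_update_diag[OF gh I J ab] act_contr[OF gh I J ab])
  qed
qed

lemma Aop_act:
  assumes "gh \<in> GL N"
  shows "Aop N m n (act N m n gh T) = act N m n gh (Aop N m n T)"
  using assms contr_act
  by (cases gh) (simp add: Aop_def linear_op_sum[OF linear_op_act] fun_eq_iff)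

lemma Cop_act:
  assumes "gh \<in> GL N"
  shows "Cop N m n (act N m n gh T) = act N m n gh (Cop N m n T)"
  unfolding Cop_def
  by (simp add: Lop_act Rop_act Aop_act[OF assms] linear_opD[OF linear_op_act] linear_op_diff[OF linear_op_act])

section \<open>The action of the Lie algebra\<close>

definition transvection :: "nat \<Rightarrow> nat \<Rightarrow> complex \<Rightarrow> nat \<Rightarrow> nat \<Rightarrow> complex" where
  "transvection i j t p q = delta p q + t * delta (p, q) (i, j)"

definition dilation :: "nat \<Rightarrow> complex \<Rightarrow> nat \<Rightarrow> nat \<Rightarrow> complex" where
  "dilation i s p q = delta p q * (if p = i then s else 1)"

lemma transvection_in_GL:
  assumes "i \<noteq> j"
  shows "(transvection i j t, transvection i j (- t)) \<in> GL N"
proof -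
  have "(\<Sum>k<N. transvection i j s p k * transvection i j (- s) k q) = delta p q"
    if "p < N" "q < N" for s p q
    using assms that by (simp add: transvection_def delta_def algebra_simps sum.distrib
        if_distrib[of "\<lambda>x. x * _"] if_distrib[of "\<lambda>x. _ * x"] cong: if_cong)
  from this[where s = t] this[where s = "- t"] show ?thesis
    by (simp add: GL_def delta_def)
qed

lemma dilation_in_GL:
  assumes "s \<noteq> 0"
  shows "(dilation i s, dilation i (1 / s)) \<in> GL N"
  using assms by (simp add: GL_def dilation_def delta_def if_distrib[of "\<lambda>x. x * _"] cong: if_cong)

lemma prod_transvection_has_derivative:
  "((\<lambda>t. \<Prod>a<k. transvection i j (s * t) (p a) (q a)) has_field_derivative
     s * (\<Sum>a<k. delta (p a, q a) (i, j) * (\<Prod>c\<in>{..<k} - {a}. delta (p c) (q c)))) (at 0)"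
proof -
  have "((\<lambda>t. transvection i j (s * t) (p a) (q a)) has_field_derivative s * delta (p a, q a) (i, j)) (at 0)"
    for a
    unfolding transvection_def by (auto intro!: derivative_eq_intros)
  then have "((\<lambda>t. \<Prod>a<k. transvection i j (s * t) (p a) (q a)) has_field_derivative
      (\<Sum>a<k. s * delta (p a, q a) (i, j) * (\<Prod>c\<in>{..<k} - {a}. transvection i j (s * 0) (p c) (q c)))) (at 0)"
    by (rule has_field_derivative_prod)
  then show ?thesis
    by (simp add: transvection_def sum_distrib_left mult.assoc)
qed

text \<open>The action of the elementary matrix \<open>E_ij\<close> of \<open>gl(N)\<close>: on a factor \<open>V\<close> it maps
  \<open>e_j\<close> to \<open>e_i\<close>, on a factor \<open>V*\<close> it maps \<open>e^i\<close> to \<open>-e^j\<close>.\<close>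

definition Eop :: "nat \<Rightarrow> nat \<Rightarrow> nat \<Rightarrow> nat \<Rightarrow> nat \<Rightarrow> tensor \<Rightarrow> tensor" where
  "Eop N m n i j T = (\<lambda>I J. if I \<in> idx N m \<and> J \<in> idx N n then
     (\<Sum>a<m. if I ! a = i then T (I[a := j]) J else 0) - (\<Sum>b<n. if J ! b = j then T I (J[b := i]) else 0)
     else 0)"

lemma linear_op_Eop: "linear_op (Eop N m n i j)"
proof -
  have "(if P then x + y else 0) = (if P then x else 0) + (if P then y else (0::complex))"
    and "(if P then c * x else 0) = c * (if P then x else (0::complex))" for P c x y
    by simp_all
  then show ?thesis
    by (simp add: linear_op_def Eop_def fun_eq_iff sum.distrib sum_distrib_left right_diff_distrib)
qed

lemma act_transvection_has_derivative:
  assumes "i < N" "j < N"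
  shows "((\<lambda>t. act N m n (transvection i j t, transvection i j (- t)) T I J) has_field_derivative
    Eop N m n i j T I J) (at 0)"
proof (cases "I \<in> idx N m \<and> J \<in> idx N n")
  case False
  then have "act N m n gh T I J = 0" "Eop N m n i j T I J = 0" for gh
    by (auto simp: act_def Eop_def)
  then show ?thesis by simp
next
  case True
  then have I: "I \<in> idx N m" and J: "J \<in> idx N n" by auto
  define G where "G t I' = (\<Prod>a<m. transvection i j t (I ! a) (I' ! a))" for t I'
  define H where "H t J' = (\<Prod>b<n. transvection i j (- t) (J' ! b) (J ! b))" for t J'
  define G' where "G' I' = (\<Sum>a<m. delta (I ! a, I' ! a) (i, j) * (\<Prod>c\<in>{..<m} - {a}. delta (I ! c) (I' ! c)))" for I'
  define H' where "H' J' = (\<Sum>b<n. delta (J ! b, J' ! b) (j, i) * (\<Prod>d\<in>{..<n} - {b}. delta (J ! d) (J' ! d)))" for J'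
  have dG: "((\<lambda>t. G t I') has_field_derivative G' I') (at 0)" for I'
    using prod_transvection_has_derivative[where i = i and j = j and s = 1 and k = m and p = "\<lambda>a. I ! a" and q = "\<lambda>a. I' ! a"] by (simp add: G_def G'_def)
  have dH: "((\<lambda>t. H t J') has_field_derivative - H' J') (at 0)" for J'
  proof -
    have "delta (J' ! b, J ! b) (i, j) = delta (J ! b, J' ! b) (j, i)"
      "delta (J' ! b) (J ! b) = delta (J ! b) (J' ! b)" for b
      by (auto simp: delta_def)
    then show ?thesis
      using prod_transvection_has_derivative[where i = i and j = j and s = "- 1" and k = n and p = "\<lambda>b. J' ! b" and q = "\<lambda>b. J ! b"]
      by (simp add: H_def H'_def)
  qed
  have G0: "G 0 I' = (\<Prod>c<m. delta (I ! c) (I' ! c))" for I'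
    by (simp add: G_def transvection_def)
  have H0: "H 0 J' = (\<Prod>d<n. delta (J ! d) (J' ! d))" for J'
    by (simp add: H_def transvection_def delta_commute)
  have "((\<lambda>t. \<Sum>I'\<in>idx N m. \<Sum>J'\<in>idx N n. G t I' * T I' J' * H t J') has_field_derivative
      (\<Sum>I'\<in>idx N m. \<Sum>J'\<in>idx N n. G' I' * T I' J' * H 0 J' - G 0 I' * T I' J' * H' J')) (at 0)"
    by (intro DERIV_sum DERIV_cong[OF DERIV_mult[OF DERIV_mult[OF dG DERIV_const] dH]]) (simp add: algebra_simps)
  moreover have "(\<Sum>I'\<in>idx N m. \<Sum>J'\<in>idx N n. G' I' * T I' J' * H 0 J' - G 0 I' * T I' J' * H' J')
      = (\<Sum>I'\<in>idx N m. G' I' * (\<Sum>J'\<in>idx N n. (\<Prod>d<n. delta (J ! d) (J' ! d)) * T I' J'))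
        - (\<Sum>J'\<in>idx N n. H' J' * (\<Sum>I'\<in>idx N m. (\<Prod>c<m. delta (I ! c) (I' ! c)) * T I' J'))"
    by (simp add: G0 H0 sum_subtractf sum_distrib_left sum.swap[where A = "idx N n"] mult_ac)
  moreover have "\<dots> = Eop N m n i j T I J"
    using I J assms by (simp add: sum_idx_prod_delta sum_idx_delta_update G'_def H'_def Eop_def)
  ultimately show ?thesis
    using I J by (simp add: act_def G_def H_def)
qed

lemma Eop_diag:
  assumes "I \<in> idx N m" "J \<in> idx N n"
  shows "Eop N m n i i T I J = (of_nat (count_list I i) - of_nat (count_list J i)) * T I J"
proof -
  have "Eop N m n i i T I J = (\<Sum>a<m. if I ! a = i then T I J else 0) - (\<Sum>b<n. if J ! b = i then T I J else 0)"
  proof -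
    have "(\<Sum>a<m. if I ! a = i then T (I[a := i]) J else 0) = (\<Sum>a<m. if I ! a = i then T I J else 0)"
      "(\<Sum>b<n. if J ! b = i then T I (J[b := i]) else 0) = (\<Sum>b<n. if J ! b = i then T I J else 0)"
      by (auto intro!: sum.cong)
    then show ?thesis using assms by (simp add: Eop_def)
  qed
  also have "\<dots> = (of_nat (count_list I i) - of_nat (count_list J i)) * T I J"
    using assms by (simp add: sum_nth_eq_count_list idx_length algebra_simps)
  finally show ?thesis .
qed

lemma act_dilation:
  assumes I: "I \<in> idx N m" and J: "J \<in> idx N n"
  shows "act N m n (dilation i s, dilation i t) T I J = s ^ count_list I i * t ^ count_list J i * T I J"
proof -
  have g: "(\<Prod>a<m. dilation i s (I ! a) (I' ! a)) = s ^ count_list I i * (\<Prod>c<m. delta (I ! c) (I' ! c))" for I'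
    using I by (simp add: dilation_def prod.distrib prod_nth_eq_count_list idx_length)
  have h: "(\<Prod>b<n. dilation i t (J' ! b) (J ! b)) = t ^ count_list J' i * (\<Prod>d<n. delta (J ! d) (J' ! d))"
    if "J' \<in> idx N n" for J'
    using that by (simp add: dilation_def prod.distrib prod_nth_eq_count_list idx_length delta_commute)
  have "act N m n (dilation i s, dilation i t) T I J = s ^ count_list I i * (\<Sum>I'\<in>idx N m. (\<Prod>c<m. delta (I ! c) (I' ! c)) *
      (\<Sum>J'\<in>idx N n. (\<Prod>d<n. delta (J ! d) (J' ! d)) * (t ^ count_list J' i * T I' J')))"
    using I J by (simp add: act_def g h sum_distrib_left mult_ac cong: sum.cong)
  then show ?thesis
    using I J by (simp add: sum_idx_prod_delta)
qed

section \<open>The Casimir element\<close>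

text \<open>The terms of \<open>E_ij E_ji\<close> in which both factors act on the same block of indices
  (an entry \<open>i\<close> of \<open>K\<close> becomes \<open>j\<close>, then an entry \<open>j\<close> becomes \<open>i\<close>), and those in which
  they act on different blocks.\<close>

definition exchange_sum :: "nat \<Rightarrow> nat list \<Rightarrow> (nat list \<Rightarrow> complex) \<Rightarrow> nat \<Rightarrow> nat \<Rightarrow> complex" where
  "exchange_sum k K F i j =
     (\<Sum>a<k. \<Sum>c<k. if K ! a = i \<and> K[a := j] ! c = j then F (K[a := j, c := i]) else 0)"

lemma exchange_sum_split:
  assumes "length K = k"
  shows "exchange_sum k K F i j = of_nat (count_list K i) * F K
    + (\<Sum>a<k. \<Sum>c<k. if c \<noteq> a \<and> K ! a = i \<and> K ! c = j then F (K[a := j, c := i]) else 0)"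
proof -
  have "(if K ! a = i \<and> K[a := j] ! c = j then F (K[a := j, c := i]) else 0)
      = (if c = a then if K ! a = i then F K else 0 else 0)
        + (if c \<noteq> a \<and> K ! a = i \<and> K ! c = j then F (K[a := j, c := i]) else 0)"
    if "a < k" "c < k" for a c
    using assms that by (auto simp: nth_list_update)
  then have "exchange_sum k K F i j = (\<Sum>a<k. \<Sum>c<k. (if c = a then if K ! a = i then F K else 0 else 0)
      + (if c \<noteq> a \<and> K ! a = i \<and> K ! c = j then F (K[a := j, c := i]) else 0))"
    unfolding exchange_sum_def by (intro sum.cong refl) simp
  also have "\<dots> = (\<Sum>a<k. if K ! a = i then F K else 0)
      + (\<Sum>a<k. \<Sum>c<k. if c \<noteq> a \<and> K ! a = i \<and> K ! c = j then F (K[a := j, c := i]) else 0)"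
    by (simp add: sum.distrib)
  finally have "exchange_sum k K F i j = \<dots>" .
  then show ?thesis
    using assms by (simp add: sum_nth_eq_count_list)
qed

lemma exchange_sum_antisym:
  assumes "length K = k"
  shows "exchange_sum k K F i j - exchange_sum k K F j i
    = (of_nat (count_list K i) - of_nat (count_list K j)) * F K"
proof -
  have "(\<Sum>a<k. \<Sum>c<k. if c \<noteq> a \<and> K ! a = i \<and> K ! c = j then F (K[a := j, c := i]) else 0)
      = (\<Sum>a<k. \<Sum>c<k. if c \<noteq> a \<and> K ! a = j \<and> K ! c = i then F (K[a := i, c := j]) else 0)"
    by (subst sum.swap) (auto intro!: sum.cong simp: list_update_swap)
  then show ?thesis
    using assms by (simp add: exchange_sum_split algebra_simps)
qed

lemma sum_exchange_sum:
  assumes K: "K \<in> idx N k"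
  shows "(\<Sum>i<N. \<Sum>j<N. exchange_sum k K F i j) = of_nat (N * k) * F K + 2 * (\<Sum>b<k. \<Sum>a<b. F (swap_at K a b))"
proof -
  have len: "length K = k" using K by (simp add: idx_length)
  have "(\<Sum>i<N. of_nat (count_list K i)) = (of_nat k :: complex)"
    using K sum_count_set[of K "{..<N}"] by (simp add: idx_def flip: of_nat_sum)
  moreover have "(\<Sum>i<N. \<Sum>j<N. of_nat (count_list K i) * F K)
      = of_nat N * ((\<Sum>i<N. of_nat (count_list K i)) * F K)"
    by (simp add: sum_distrib_left sum_distrib_right mult_ac)
  ultimately have diag: "(\<Sum>i<N. \<Sum>j<N. of_nat (count_list K i) * F K) = of_nat (N * k) * F K"
    by simp
  have "(\<Sum>i<N. \<Sum>j<N. if c \<noteq> a \<and> K ! a = i \<and> K ! c = j then F (K[a := j, c := i]) else 0)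
      = (if c \<noteq> a then F (swap_at K a c) else 0)" if "a < k" "c < k" for a c
    using K that by (simp add: idx_nth_less swap_at_def sum_pair_delta)
  then have "(\<Sum>i<N. \<Sum>j<N. \<Sum>a<k. \<Sum>c<k. if c \<noteq> a \<and> K ! a = i \<and> K ! c = j then F (K[a := j, c := i]) else 0)
      = (\<Sum>a<k. \<Sum>c<k. if c \<noteq> a then F (swap_at K a c) else 0)"
    by (subst sum_swap_outer_pairs) (intro sum.cong refl, simp)
  also have "\<dots> = 2 * (\<Sum>b<k. \<Sum>a<b. F (swap_at K a b))"
    by (rule sum_off_diagonal_symmetric) (simp add: swap_at_commute)
  finally have off: "(\<Sum>i<N. \<Sum>j<N. \<Sum>a<k. \<Sum>c<k. if c \<noteq> a \<and> K ! a = i \<and> K ! c = j then F (K[a := j, c := i]) else 0)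
      = 2 * (\<Sum>b<k. \<Sum>a<b. F (swap_at K a b))" .
  show ?thesis
    using diag off len by (simp add: exchange_sum_split sum.distrib)
qed

definition cross_sum :: "nat \<Rightarrow> nat \<Rightarrow> tensor \<Rightarrow> nat list \<Rightarrow> nat list \<Rightarrow> nat \<Rightarrow> nat \<Rightarrow> complex" where
  "cross_sum m n T I J i j =
     (\<Sum>a<m. \<Sum>d<n. if I ! a = i \<and> J ! d = i then T (I[a := j]) (J[d := j]) else 0)"

lemma sum_cross_sum:
  assumes I: "I \<in> idx N m" and J: "J \<in> idx N n"
  shows "(\<Sum>i<N. \<Sum>j<N. cross_sum m n T I J i j) = Aop N m n T I J"
proof -
  have "(\<Sum>i<N. \<Sum>j<N. if I ! a = i \<and> J ! d = i then T (I[a := j]) (J[d := j]) else 0) = contr N m n a d T I J"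
    if "a < m" "d < n" for a d
  proof -
    have "(\<Sum>i<N. \<Sum>j<N. if I ! a = i \<and> J ! d = i then T (I[a := j]) (J[d := j]) else 0)
        = (\<Sum>i<N. if i = J ! d then if I ! a = J ! d then \<Sum>j<N. T (I[a := j]) (J[d := j]) else 0 else 0)"
      by (intro sum.cong refl) auto
    then show ?thesis
      using I J that by (simp add: contr_def idx_nth_less)
  qed
  then show ?thesis
    unfolding cross_sum_def Aop_def by (subst sum_swap_outer_pairs) (intro sum.cong refl, simp)
qed

lemma Eop_Eop:
  assumes I: "I \<in> idx N m" and J: "J \<in> idx N n" and ij: "i < N" "j < N"
  shows "Eop N m n i j (Eop N m n j i T) I J
    = exchange_sum m I (\<lambda>K. T K J) i j + exchange_sum n J (T I) j i
      - cross_sum m n T I J i j - cross_sum m n T I J j i"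
proof -
  have "Eop N m n i j (Eop N m n j i T) I J
    = (\<Sum>a<m. if I ! a = i then (\<Sum>c<m. if I[a := j] ! c = j then T (I[a := j, c := i]) J else 0)
                                - (\<Sum>d<n. if J ! d = i then T (I[a := j]) (J[d := j]) else 0) else 0)
    - (\<Sum>b<n. if J ! b = j then (\<Sum>c<m. if I ! c = j then T (I[c := i]) (J[b := i]) else 0)
                                - (\<Sum>d<n. if J[b := i] ! d = i then T I (J[b := i, d := j]) else 0) else 0)"
    using I J ij by (simp add: Eop_def idx_update cong: if_cong)
  also have "\<dots> = exchange_sum m I (\<lambda>K. T K J) i j + exchange_sum n J (T I) j i - cross_sum m n T I J i j
      - (\<Sum>b<n. \<Sum>c<m. if J ! b = j \<and> I ! c = j then T (I[c := i]) (J[b := i]) else 0)"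
  proof -
    have if_diff: "(if P then x - y else 0) = (if P then x else 0) - (if P then y else (0::complex))"
      and if_sum: "(if P then sum f S else 0) = (\<Sum>s\<in>S. if P then f s else (0::complex))"
      and if_if: "(if P then if Q then x else 0 else 0) = (if P \<and> Q then x else (0::complex))"
      for P Q x y f S by simp_all
    show ?thesis
      unfolding exchange_sum_def cross_sum_def
      by (simp only: if_diff if_sum if_if sum_subtractf) (simp add: algebra_simps)
  qed
  also have "(\<Sum>b<n. \<Sum>c<m. if J ! b = j \<and> I ! c = j then T (I[c := i]) (J[b := i]) else 0)
      = cross_sum m n T I J j i"
    unfolding cross_sum_def by (subst sum.swap) (simp add: conj_commute)
  finally show ?thesis .
qed

lemma Eop_commutator:
  assumes I: "I \<in> idx N m" and J: "J \<in> idx N n" and ij: "i < N" "j < N"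
  shows "Eop N m n i j (Eop N m n j i T) I J - Eop N m n j i (Eop N m n i j T) I J
    = Eop N m n i i T I J - Eop N m n j j T I J"
proof -
  note antisym_I = exchange_sum_antisym[OF idx_length[OF I], of "\<lambda>K. T K J" i j, unfolded diff_eq_eq]
  note antisym_J = exchange_sum_antisym[OF idx_length[OF J], of "T I" i j, unfolded diff_eq_eq]
  show ?thesis
    unfolding Eop_Eop[OF I J ij] Eop_Eop[OF I J ij(2,1)] Eop_diag[OF I J] antisym_I antisym_J
    by (simp add: algebra_simps)
qed

definition Casimir :: "nat \<Rightarrow> nat \<Rightarrow> nat \<Rightarrow> tensor \<Rightarrow> tensor" where
  "Casimir N m n T = (\<lambda>I J. \<Sum>i<N. \<Sum>j<N. Eop N m n i j (Eop N m n j i T) I J)"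

lemma Casimir_eq:
  assumes I: "I \<in> idx N m" and J: "J \<in> idx N n"
  shows "Casimir N m n T I J
    = 2 * (Lop m T I J + Rop n T I J - Aop N m n T I J) + of_nat ((m + n) * N) * T I J"
proof -
  have "Casimir N m n T I J = (\<Sum>i<N. \<Sum>j<N. exchange_sum m I (\<lambda>K. T K J) i j
      + exchange_sum n J (T I) j i - cross_sum m n T I J i j - cross_sum m n T I J j i)"
    unfolding Casimir_def using Eop_Eop[OF I J] by (intro sum.cong refl) simp
  also have "\<dots> = (\<Sum>i<N. \<Sum>j<N. exchange_sum m I (\<lambda>K. T K J) i j)
      + (\<Sum>i<N. \<Sum>j<N. exchange_sum n J (T I) j i)
      - (\<Sum>i<N. \<Sum>j<N. cross_sum m n T I J i j) - (\<Sum>i<N. \<Sum>j<N. cross_sum m n T I J j i)"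
    by (simp add: sum.distrib sum_subtractf)
  also have "(\<Sum>i<N. \<Sum>j<N. exchange_sum n J (T I) j i) = (\<Sum>i<N. \<Sum>j<N. exchange_sum n J (T I) i j)"
    by (rule sum.swap)
  also have "(\<Sum>i<N. \<Sum>j<N. cross_sum m n T I J j i) = (\<Sum>i<N. \<Sum>j<N. cross_sum m n T I J i j)"
    by (rule sum.swap)
  finally show ?thesis
    using I J by (simp add: sum_exchange_sum sum_cross_sum Lop_def Rop_def algebra_simps)
qed

section \<open>Highest weight vectors\<close>

lemma Eop_upper_hw:
  assumes hv: "hw_vector N m n lam v" and ij: "i < j" "j < N"
  shows "Eop N m n i j v = (\<lambda>I J. 0)"
proof (intro ext)
  fix I J
  have "act N m n (transvection i j t, transvection i j (- t)) v = v" for t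
  proof -
    have "(transvection i j t, transvection i j (- t)) \<in> GL N"
      using ij by (intro transvection_in_GL) simp
    moreover have "\<forall>p<N. transvection i j t p p = 1" "\<forall>p<N. \<forall>q<N. q < p \<longrightarrow> transvection i j t p q = 0"
      using ij by (auto simp: transvection_def delta_def)
    ultimately show ?thesis
      using hv unfolding hw_vector_def by blast
  qed
  then have "((\<lambda>t. act N m n (transvection i j t, transvection i j (- t)) v I J) has_field_derivative 0) (at 0)"
    by simp
  moreover have "i < N" using ij by simp
  ultimately show "Eop N m n i j v I J = 0"
    using DERIV_unique act_transvection_has_derivative ij(2) by blast
qed

lemma hw_vector_count_list:
  assumes hv: "hw_vector N m n lam v" and I: "I \<in> idx N m" and J: "J \<in> idx N n"
    and i: "i < N" and nz: "v I J \<noteq> 0"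
  shows "int (count_list I i) - int (count_list J i) = lam i"
proof -
  define d where "d = int (count_list I i) - int (count_list J i)"
  have "act N m n (dilation i 2, dilation i (1 / 2)) v = (\<lambda>I J. (\<Prod>k<N. dilation i 2 k k powi lam k) * v I J)"
    using hv dilation_in_GL[of 2 i N] unfolding hw_vector_def by (auto simp: dilation_def delta_def)
  moreover have "(\<Prod>k<N. dilation i 2 k k powi lam k) = 2 powi lam i"
    using i by (simp add: dilation_def delta_def if_distrib[of "\<lambda>x. x powi _"] prod.If_cases Int_absorb1
        cong: if_cong)
  ultimately have "2 powi lam i * v I J = 2 ^ count_list I i * (1 / 2) ^ count_list J i * v I J"
    using act_dilation[OF I J, of i 2 "1 / 2" v] by simp
  then have "(2 :: complex) powi lam i = 2 powi d"
    using nz by (simp add: d_def power_int_diff power_one_over field_simps)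
  then have "(2 :: complex) powi lam i = of_real ((2 :: real) powi d)"
    by (simp add: of_real_power_int)
  then have "(2 :: real) powi lam i = 2 powi d"
    by (simp only: numeral_power_int_eq_of_real_cancel_iff)
  then show ?thesis
    by (simp add: power_int_inject d_def)
qed

lemma Eop_diag_hw:
  assumes hv: "hw_vector N m n lam v" and v: "v \<in> tens N m n" and i: "i < N"
  shows "Eop N m n i i v = (\<lambda>I J. of_int (lam i) * v I J)"
proof (intro ext)
  fix I J
  show "Eop N m n i i v I J = of_int (lam i) * v I J"
  proof (cases "I \<in> idx N m \<and> J \<in> idx N n")
    case True
    then have I: "I \<in> idx N m" and J: "J \<in> idx N n" by auto
    show ?thesis
    proof (cases "v I J = 0")
      case False
      then have "(of_int (lam i) :: complex) = of_int (int (count_list I i) - int (count_list J i))"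
        using hw_vector_count_list[OF hv I J i] by simp
      then show ?thesis by (simp add: Eop_diag[OF I J])
    qed (simp add: Eop_diag[OF I J])
  qed (use v in \<open>auto simp: Eop_def tens_def\<close>)
qed

lemma Casimir_hw:
  assumes hv: "hw_vector N m n lam v" and v: "v \<in> tens N m n"
    and I: "I \<in> idx N m" and J: "J \<in> idx N n"
  shows "Casimir N m n v I J
    = of_int (\<Sum>i<N. \<Sum>j<N. if i = j then lam i ^ 2 else if i < j then lam i - lam j else 0) * v I J"
proof -
  have "Eop N m n i j (Eop N m n j i v) I J
      = of_int (if i = j then lam i ^ 2 else if i < j then lam i - lam j else 0) * v I J"
    if i: "i < N" and j: "j < N" for i j
  proof (cases i j rule: linorder_cases)
    case less
    have "Eop N m n i j v = (\<lambda>I J. 0)" by (rule Eop_upper_hw[OF hv less j])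
    then show ?thesis
      using Eop_commutator[OF I J i j, of v] less
      by (simp add: linear_op_zero[OF linear_op_Eop] Eop_diag_hw[OF hv v] i j algebra_simps)
  next
    case equal
    then show ?thesis
      by (simp add: Eop_diag_hw[OF hv v] j linear_opD(2)[OF linear_op_Eop] power2_eq_square)
  next
    case greater
    have "Eop N m n j i v = (\<lambda>I J. 0)" by (rule Eop_upper_hw[OF hv greater i])
    then show ?thesis
      using greater by (simp add: linear_op_zero[OF linear_op_Eop])
  qed
  then have "Casimir N m n v I J
      = (\<Sum>i<N. \<Sum>j<N. of_int (if i = j then lam i ^ 2 else if i < j then lam i - lam j else 0) * v I J)"
    unfolding Casimir_def by (intro sum.cong refl) simp
  then show ?thesis
    by (simp add: sum_distrib_right)
qed

lemma sum_casimir_weights: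
  fixes f :: "nat \<Rightarrow> int"
  shows "(\<Sum>i<N. \<Sum>j<N. if i = j then f i ^ 2 else if i < j then f i - f j else 0)
    = (\<Sum>i<N. f i * (f i + int N - 1 - 2 * int i))"
proof -
  have upper: "(\<Sum>j<N. if i < j then f i else 0) = int (N - 1 - i) * f i" for i
  proof -
    have "{j \<in> {..<N}. i < j} = {i<..<N}" by auto
    then show ?thesis by (simp add: sum.inter_filter[symmetric])
  qed
  have "(\<Sum>i<N. \<Sum>j<N. if i = j then f i ^ 2 else if i < j then f i - f j else 0)
      = (\<Sum>i<N. \<Sum>j<N. (if j = i then f i ^ 2 else 0) + (if i < j then f i else 0) - (if i < j then f j else 0))"
    by (intro sum.cong refl) auto
  also have "\<dots> = (\<Sum>i<N. f i ^ 2 + int (N - 1 - i) * f i) - (\<Sum>j<N. \<Sum>i<N. if i < j then f j else 0)"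
    using sum.swap[of "\<lambda>i j. if i < j then f j else 0" "{..<N}" "{..<N}"]
    by (simp add: sum.distrib sum_subtractf upper)
  also have "\<dots> = (\<Sum>i<N. f i ^ 2 + int (N - 1 - i) * f i - int i * f i)"
  proof -
    have "(\<Sum>j<N. \<Sum>i<N. if i < j then f j else 0) = (\<Sum>j<N. int j * f j)"
      by (rule sum.cong[OF refl]) (simp add: sum_lessThan_if_less)
    then show ?thesis by (simp add: sum_subtractf)
  qed
  also have "\<dots> = (\<Sum>i<N. f i * (f i + int N - 1 - 2 * int i))"
    by (intro sum.cong refl) (auto simp: power2_eq_square algebra_simps of_nat_diff)
  finally show ?thesis .
qed

lemma sum_partition_weights:
  "(\<Sum>i<length \<mu>. int (\<mu> ! i) * (int (\<mu> ! i) + int N - 1 - 2 * int i))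
    = 2 * content \<mu> + int N * int (sum_list \<mu>)"
proof -
  have "2 * content \<mu> = (\<Sum>i<length \<mu>. 2 * (\<Sum>j<\<mu> ! i. int j) - 2 * int i * int (\<mu> ! i))"
    unfolding content_def by (simp add: sum_distrib_left sum_subtractf algebra_simps)
  also have "\<dots> = (\<Sum>i<length \<mu>. int (\<mu> ! i) * (int (\<mu> ! i) - 1) - 2 * int i * int (\<mu> ! i))"
    by (simp add: double_sum_lessThan)
  finally have "2 * content \<mu> = \<dots>" .
  moreover have "int (sum_list \<mu>) = (\<Sum>i<length \<mu>. int (\<mu> ! i))"
    by (simp add: sum_list_sum_nth atLeast0LessThan)
  ultimately show ?thesis
    by (simp add: sum_distrib_left sum.distrib[symmetric] algebra_simps)
qed

lemma sum_hw_weights: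
  assumes len: "length \<mu> + length \<nu> \<le> N"
  shows "(\<Sum>i<N. hw N \<mu> \<nu> i * (hw N \<mu> \<nu> i + int N - 1 - 2 * int i))
    = 2 * content \<mu> + 2 * content \<nu> + int N * int (sum_list \<mu> + sum_list \<nu>)"
proof -
  define w where "w \<kappa> k = int (\<kappa> ! k) * (int (\<kappa> ! k) + int N - 1 - 2 * int k)" for \<kappa> k
  have split: "hw N \<mu> \<nu> i * (hw N \<mu> \<nu> i + int N - 1 - 2 * int i)
      = (if i < length \<mu> then w \<mu> i else 0) + (if N - Suc i < length \<nu> then w \<nu> (N - Suc i) else 0)"
    if "i < N" for i
  proof -
    have "int (N - Suc i) = int N - 1 - int i" using that by (simp add: of_nat_diff)
    moreover have "\<not> (i < length \<mu> \<and> N - Suc i < length \<nu>)" using len by arith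
    ultimately show ?thesis
      by (auto simp: hw_def w_def algebra_simps)
  qed
  have "(\<Sum>i<N. hw N \<mu> \<nu> i * (hw N \<mu> \<nu> i + int N - 1 - 2 * int i))
      = (\<Sum>i<N. if i < length \<mu> then w \<mu> i else 0) + (\<Sum>i<N. if N - Suc i < length \<nu> then w \<nu> (N - Suc i) else 0)"
    by (simp add: split sum.distrib)
  also have "(\<Sum>i<N. if N - Suc i < length \<nu> then w \<nu> (N - Suc i) else 0) = (\<Sum>i<N. if i < length \<nu> then w \<nu> i else 0)"
    by (rule sum.nat_diff_reindex[where g = "\<lambda>k. if k < length \<nu> then w \<nu> k else 0"])
  finally have "(\<Sum>i<N. hw N \<mu> \<nu> i * (hw N \<mu> \<nu> i + int N - 1 - 2 * int i))
      = (\<Sum>i<length \<mu>. w \<mu> i) + (\<Sum>i<length \<nu>. w \<nu> i)"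
    using len by (simp add: sum_lessThan_if_less)
  then show ?thesis
    unfolding w_def sum_partition_weights by (simp add: algebra_simps)
qed

lemma Cop_in_tens:
  assumes T: "T \<in> tens N m n"
  shows "Cop N m n T \<in> tens N m n"
  unfolding tens_def
proof (intro CollectI allI impI)
  fix I J assume out: "\<not> (I \<in> idx N m \<and> J \<in> idx N n)"
  have "T (swap_at I a b) J = 0" if "a < b" "b < m" for a b
    using T out that by (auto simp: tens_def swap_at_in_idx_iff)
  moreover have "T I (swap_at J a b) = 0" if "a < b" "b < n" for a b
    using T out that by (auto simp: tens_def swap_at_in_idx_iff)
  moreover have "contr N m n a b T I J = 0" for a b
    using out by (auto simp: contr_def)
  ultimately show "Cop N m n T I J = 0"
    using T out by (simp add: Cop_def Lop_def Rop_def Aop_def tens_def)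
qed

lemma Cop_hw:
  assumes hv: "hw_vector N m n (hw N \<mu> \<nu>) v" and v: "v \<in> tens N m n"
    and len: "length \<mu> + length \<nu> \<le> N" and m: "m = sum_list \<mu> + r" and n: "n = sum_list \<nu> + r"
  shows "Cop N m n v = (\<lambda>I J. of_int (content \<mu> + content \<nu> + int N * int (sum_list \<nu>)) * v I J)"
proof (intro ext)
  fix I J
  show "Cop N m n v I J = of_int (content \<mu> + content \<nu> + int N * int (sum_list \<nu>)) * v I J"
  proof (cases "I \<in> idx N m \<and> J \<in> idx N n")
    case False
    then show ?thesis
      using v Cop_in_tens[OF v] by (simp add: tens_def)
  next
    case True
    then have I: "I \<in> idx N m" and J: "J \<in> idx N n" by auto
    have "2 * Cop N m n v I J = Casimir N m n v I J - of_nat ((m + n) * N) * v I J + 2 * of_nat (N * n) * v I J"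
      by (simp add: Casimir_eq[OF I J] Cop_def algebra_simps)
    also have "\<dots> = 2 * (of_int (content \<mu> + content \<nu> + int N * int (sum_list \<nu>)) * v I J)"
      unfolding Casimir_hw[OF hv v I J] sum_casimir_weights sum_hw_weights[OF len]
      by (simp add: m n algebra_simps)
    finally show ?thesis by simp
  qed
qed

lemma eigenvalue_on_irred_subrep:
  assumes W: "irred_subrep N m n W" and v: "v \<in> W" "v \<noteq> (\<lambda>I J. 0)"
    and F: "linear_op F" "\<And>gh T. gh \<in> GL N \<Longrightarrow> F (act N m n gh T) = act N m n gh (F T)"
    and Fv: "F v = (\<lambda>I J. c * v I J)" and T: "T \<in> W"
  shows "F T = (\<lambda>I J. c * T I J)"
proof -
  define W' where "W' = {T \<in> W. F T = (\<lambda>I J. c * T I J)}"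
  have "subrep N m n W'"
    using W unfolding W'_def irred_subrep_def subrep_def subspace_t_def
    by (auto simp: linear_opD[OF F(1)] linear_op_zero[OF F(1)] linear_opD[OF linear_op_act] F(2)
        algebra_simps)
  moreover have "W' \<subseteq> W" and "v \<in> W'"
    using v Fv by (auto simp: W'_def)
  ultimately have "W' = W"
    using W v by (auto simp: irred_subrep_def)
  then show ?thesis
    using T by (auto simp: W'_def)
qed

lemma Cop_of_type:
  assumes W: "of_type N m n \<mu> \<nu> W" and T: "T \<in> W" and "(\<mu>, \<nu>) \<in> Lambda m n N"
  shows "Cop N m n T = (\<lambda>I J. of_int (content \<mu> + content \<nu> + int N * int (sum_list \<nu>)) * T I J)"
proof -
  obtain r where len: "length \<mu> + length \<nu> \<le> N" and m: "m = sum_list \<mu> + r" and n: "n = sum_list \<nu> + r"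
    using assms(3) by (auto simp: Lambda_def)
  obtain v where irr: "irred_subrep N m n W" and v: "v \<in> W" and hv: "hw_vector N m n (hw N \<mu> \<nu>) v"
    using W by (auto simp: of_type_def)
  have "v \<in> tens N m n" "v \<noteq> (\<lambda>I J. 0)"
    using irr v hv by (auto simp: irred_subrep_def subrep_def subspace_t_def hw_vector_def)
  then show ?thesis
    using eigenvalue_on_irred_subrep[OF irr v(1) _ linear_op_Cop Cop_act Cop_hw[OF hv _ len m n] T] by blast
qed

theorem proposition2p6:
  fixes m n N :: nat and \<mu> \<nu> :: "nat list" and T :: tensor
  assumes "m \<ge> 1" and "n \<ge> 1" and "N \<ge> 1"
    and "(\<mu>, \<nu>) \<in> Lambda m n N"
    and "T \<in> isotypic N m n \<mu> \<nu>"
  shows "Cop N m n T =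
    (\<lambda>I J. of_int (content \<mu> + content \<nu> + int N * int (sum_list \<nu>)) * T I J)"
proof -
  obtain k :: nat and Ts where Ts: "\<forall>i<k. \<exists>W. of_type N m n \<mu> \<nu> W \<and> Ts i \<in> W"
    and T: "T = (\<lambda>I J. \<Sum>i<k. Ts i I J)"
    using assms(5) unfolding isotypic_def mem_Collect_eq by blast
  have "Cop N m n (Ts i) = (\<lambda>I J. of_int (content \<mu> + content \<nu> + int N * int (sum_list \<nu>)) * Ts i I J)"
    if "i < k" for i
    using Ts that Cop_of_type[OF _ _ assms(4)] by blast
  then show ?thesis
    unfolding T by (simp add: linear_op_sum[OF linear_op_Cop] sum_distrib_left)
qed

end
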